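(* In the oracle setting below with $K=2$ populations (sizes $n_1,n_2$, $n=n_1+n_2$), run Algorithm BS* on $\mathcal D$. (a) In the first iteration, transferring an observation from population 1 to $C_1$ maximizes $d_w^*(C_1^{(1)},C_2^{(1)})$ if and only if $n_1\le n_2$. Furthermore, if $n_1\le n_2$ and an observation of population 1 is transferred in the first iteration, then in each of the first $n_1$ iterations an observation of population 1 is transferred to $C_1$, and $r\mapsto d_w^*(C_1^{(r)},C_2^{(r)})$ is increasing for $r=1,\dots,n_1$. (b) Under the conditions of (a), $r\mapsto d_w^*(C_1^{(r)},C_2^{(r)})$ is decreasing for $r\ge n_1$.
   Context: Let $k$ be a characteristic kernel on a separable metric space $\mathcal X$ and, for Borel probability measures $P,Q$, $d(P,Q)=\iint k\,dP\,dP+\iint k\,dQ\,dQ-2\iint k\,dP\,dQ$ (squared MMD). Oracle setting: $\mathcal D=\mathcal D_1\cup\dots\cup\mathcal D_K$ (disjoint), $\mathcal D_i$ the $n_i$ observations from population $i$, $\widehat P_i$ the empirical distribution of $\mathcal D_i$, the $\widehat P_i$ being pairwise distinct. For nonempty $S\subseteq\mathcal D$ with $m_i=|S\cap\mathcal D_i|$, $\widetilde P_S=\sum_i\frac{m_i}{|S|}\widehat P_i$; for disjoint nonempty $S_1,S_2$, $d_w^*(S_1,S_2)=\frac{|S_1||S_2|}{|S_1|+|S_2|}d(\widetilde P_{S_1},\widetilde P_{S_2})$. Algorithm BS* on $\mathcal E$: $C_1^{(0)}=\emptyset$, $C_2^{(0)}=\mathcal E$; for $r=1,\dots,|\mathcal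 E|-1$ choose $c\in C_2^{(r-1)}$ maximizing $d_w^*(C_1^{(r-1)}\cup\{c\},C_2^{(r-1)}\setminus\{c\})$ and set $C_1^{(r)}=C_1^{(r-1)}\cup\{c\}$, $C_2^{(r)}=C_2^{(r-1)}\setminus\{c\}$. "An observation from population $i$ is transferred at iteration $r$" means the chosen $c$ lies in $\mathcal D_i$. *)

theory Defs
  imports "HOL-Probability.Probability"
begin

definition mmd2 :: "('x \<Rightarrow> 'x \<Rightarrow> real) \<Rightarrow> 'x measure \<Rightarrow> 'x measure \<Rightarrow> real" where
  "mmd2 k P Q =
     integral\<^sup>L P (\<lambda>x. integral\<^sup>L P (\<lambda>y. k x y))
   + integral\<^sup>L Q (\<lambda>x. integral\<^sup>L Q (\<lambda>y. k x y))
   - 2 * integral\<^sup>L P (\<lambda>x. integral\<^sup>L Q (\<lambda>y. k x y))"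

definition pd_kernel :: "('x::topological_space \<Rightarrow> 'x \<Rightarrow> real) \<Rightarrow> bool" where
  "pd_kernel k \<longleftrightarrow>
     (\<forall>x y. k x y = k y x)
   \<and> (\<forall>(n::nat) (c::nat \<Rightarrow> real) (z::nat \<Rightarrow> 'x).
         0 \<le> (\<Sum>i<n. \<Sum>j<n. c i * c j * k (z i) (z j)))
   \<and> (\<exists>B. \<forall>x y. \<bar>k x y\<bar> \<le> B)
   \<and> case_prod k \<in> borel_measurable (borel \<Otimes>\<^sub>M borel)"

definition characteristic_kernel :: "('x::topological_space \<Rightarrow> 'x \<Rightarrow> real) \<Rightarrow> bool" where
  "characteristic_kernel k \<longleftrightarrow> pd_kernel k \<and>
     (\<forall>P Q. prob_space P \<longrightarrow> prob_space Q \<longrightarrow> sets P = sets borel \<longrightarrow> sets Q = sets borel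
        \<longrightarrow> mmd2 k P Q = 0 \<longrightarrow> P = Q)"

text \<open>Observations are indexed by elements of type 'o; X o is the value of observation o.
  Population i (i = 1..K) consists of the observations D i.\<close>

definition emp_dist :: "('o \<Rightarrow> 'x::topological_space) \<Rightarrow> 'o set \<Rightarrow> 'x measure" where
  "emp_dist X A = distr (uniform_count_measure A) borel X"

text \<open>Oracle mixture  P~_S = sum_i (m_i/|S|) P^_i  with m_i = |S inter D_i|,
  written as the Borel image of a weighted point measure on the observations.\<close>
definition oracle_mix :: "nat \<Rightarrow> (nat \<Rightarrow> 'o set) \<Rightarrow> ('o \<Rightarrow> 'x::topological_space) \<Rightarrow> 'o set \<Rightarrow> 'x measure" where
  "oracle_mix K D X S = distr
     (point_measure (\<Union>i\<in>{1..K}. D i)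
        (\<lambda>ob. ennreal (\<Sum>i\<in>{1..K}. if ob \<in> D i
              then real (card (S \<inter> D i)) / (real (card S) * real (card (D i))) else 0)))
     borel X"

definition dw_star :: "('x::topological_space \<Rightarrow> 'x \<Rightarrow> real) \<Rightarrow> nat \<Rightarrow> (nat \<Rightarrow> 'o set) \<Rightarrow> ('o \<Rightarrow> 'x)
    \<Rightarrow> 'o set \<Rightarrow> 'o set \<Rightarrow> real" where
  "dw_star k K D X S1 S2 =
     real (card S1) * real (card S2) / (real (card S1) + real (card S2))
     * mmd2 k (oracle_mix K D X S1) (oracle_mix K D X S2)"

text \<open>C1 is a run of BS* on E with split criterion dw: C1 r = C_1^{(r)}, and
  C_2^{(r)} = E - C1 r, for r = 0..|E|-1. Ties may be broken arbitrarily.\<close>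
definition BS_run :: "('o set \<Rightarrow> 'o set \<Rightarrow> real) \<Rightarrow> 'o set \<Rightarrow> (nat \<Rightarrow> 'o set) \<Rightarrow> bool" where
  "BS_run dw E C1 \<longleftrightarrow> C1 0 = {} \<and>
     (\<forall>r\<in>{1..card E - 1}. \<exists>c\<in>E - C1 (r - 1).
        C1 r = insert c (C1 (r - 1)) \<and>
        (\<forall>c'\<in>E - C1 (r - 1).
           dw (insert c' (C1 (r - 1))) (E - insert c' (C1 (r - 1)))
           \<le> dw (insert c (C1 (r - 1))) (E - insert c (C1 (r - 1)))))"

definition transferred_from :: "(nat \<Rightarrow> 'o set) \<Rightarrow> nat \<Rightarrow> 'o set \<Rightarrow> bool" where
  "transferred_from C1 r A \<longleftrightarrow> (\<exists>c\<in>A. C1 r - C1 (r - 1) = {c})"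

end

theory Submission
  imports Defs
begin

text \<open>With two populations the oracle mixture of a set S depends only on the fraction p of
  its members drawn from population 1: it is the mixture with weights p and 1 - p of the two
  empirical distributions, and the squared MMD between two such mixtures is (p - q)^2 d12 with
  d12 the squared MMD between the empirical distributions, positive since k is characteristic.
  Consequently a split whose first part has s elements, a of them from population 1, has
  d_w^* = (a N - s n1)^2 / (N s (N - s)) d12 with N = n1 + n2, and everything reduces to
  comparing values of this function. A singleton from population 1 gives n2^2 and one from
  population 2 gives n1^2 (times a common factor), a tie when n1 = n2, whence the assumption
  on the first transfer. From s = 2 on, an observation of population 1 beats one of
  population 2 because N < 2 s n2. Along a = s the value s n2^2 / (N (N - s)) increases,
  and once a = n1 the value n1^2 (N - s) / (N s) decreases.\<close>

lemma pd_kernel_measurable: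
  assumes "pd_kernel k"
  shows "k x \<in> borel_measurable borel" "(\<lambda>y. k y x) \<in> borel_measurable borel"
proof -
  have k: "case_prod k \<in> borel_measurable (borel \<Otimes>\<^sub>M borel)"
    using assms unfolding pd_kernel_def by blast
  show "k x \<in> borel_measurable borel"
    using measurable_compose[OF measurable_Pair1' k] by simp
  show "(\<lambda>y. k y x) \<in> borel_measurable borel"
    using measurable_compose[OF measurable_Pair2' k] by simp
qed

lemma pd_kernel_quadratic_form_nonneg:
  assumes "pd_kernel k" and "finite A"
  shows "0 \<le> (\<Sum>x\<in>A. \<Sum>y\<in>A. w x * w y * k (X x) (X y))"
proof -
  obtain h where h: "bij_betw h {..<card A} A"
    using ex_bij_betw_nat_finite[OF assms(2)] by (auto simp: lessThan_atLeast0)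
  have pd: "\<And>(n::nat) c z. 0 \<le> (\<Sum>i<n. \<Sum>j<n. c i * c j * k (z i) (z j))"
    using assms(1) by (simp add: pd_kernel_def)
  have "0 \<le> (\<Sum>i<card A. \<Sum>j<card A. w (h i) * w (h j) * k (X (h i)) (X (h j)))"
    using pd[where n="card A" and c="\<lambda>i. w (h i)" and z="\<lambda>i. X (h i)"] .
  also have "\<dots> = (\<Sum>i<card A. \<Sum>y\<in>A. w (h i) * w y * k (X (h i)) (X y))"
    by (intro sum.cong refl sum.reindex_bij_betw[OF h])
  also have "\<dots> = (\<Sum>x\<in>A. \<Sum>y\<in>A. w x * w y * k (X x) (X y))"
    by (rule sum.reindex_bij_betw[OF h])
  finally show ?thesis .
qed

lemma integral_distr_point_measure_finite:
  fixes g :: "'x::topological_space \<Rightarrow> real"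
  assumes "finite A" "\<And>a. a \<in> A \<Longrightarrow> 0 \<le> w a" "g \<in> borel_measurable borel"
  shows "integral\<^sup>L (distr (point_measure A (\<lambda>a. ennreal (w a))) borel X) g = (\<Sum>a\<in>A. w a * g (X a))"
  using assms by (simp add: integral_distr lebesgue_integral_point_measure_finite)

lemma distr_point_measure_restrict:
  assumes "finite A" "B \<subseteq> A" "\<And>a. a \<in> B \<Longrightarrow> f a = g a" "\<And>a. a \<in> A - B \<Longrightarrow> f a = 0"
  shows "distr (point_measure A f) borel X = distr (point_measure B g) borel X"
proof (rule measure_eqI)
  fix S assume S: "S \<in> sets (distr (point_measure A f) borel X)"
  have "(\<Sum>a\<in>X -` S \<inter> A. f a) = (\<Sum>a\<in>X -` S \<inter> B. g a)"
    using assms by (intro sum.mono_neutral_cong_right) auto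
  then show "emeasure (distr (point_measure A f) borel X) S = emeasure (distr (point_measure B g) borel X) S"
    using assms finite_subset[OF assms(2)] S
    by (simp add: emeasure_distr space_point_measure emeasure_point_measure_finite)
qed simp

lemma mmd2_distr_point_measure:
  assumes pd: "pd_kernel k" and A: "finite A"
    and w_nonneg: "\<And>a. a \<in> A \<Longrightarrow> 0 \<le> w a" and v_nonneg: "\<And>a. a \<in> A \<Longrightarrow> 0 \<le> v a"
  shows "mmd2 k (distr (point_measure A (\<lambda>a. ennreal (w a))) borel X)
                (distr (point_measure A (\<lambda>a. ennreal (v a))) borel X)
       = (\<Sum>x\<in>A. \<Sum>y\<in>A. (w x - v x) * (w y - v y) * k (X x) (X y))"
proof -
  have sym: "k x y = k y x" for x y
    using pd by (simp add: pd_kernel_def)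
  have meas: "(\<lambda>x. \<Sum>y\<in>A. u y * k x (X y)) \<in> borel_measurable borel" for u :: "_ \<Rightarrow> real"
    using pd_kernel_measurable(2)[OF pd] by measurable
  have bilinear: "integral\<^sup>L (distr (point_measure A (\<lambda>a. ennreal (u a))) borel X)
      (\<lambda>x. integral\<^sup>L (distr (point_measure A (\<lambda>a. ennreal (u' a))) borel X) (\<lambda>y. k x y))
      = (\<Sum>x\<in>A. \<Sum>y\<in>A. u x * u' y * k (X x) (X y))"
    if "\<And>a. a \<in> A \<Longrightarrow> 0 \<le> u a" "\<And>a. a \<in> A \<Longrightarrow> 0 \<le> u' a" for u u'
    using that A meas pd_kernel_measurable(1)[OF pd]
    by (simp add: integral_distr_point_measure_finite sum_distrib_left mult.assoc)
  have swap: "(\<Sum>x\<in>A. \<Sum>y\<in>A. v x * w y * k (X x) (X y)) = (\<Sum>x\<in>A. \<Sum>y\<in>A. w x * v y * k (X x) (X y))"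
    by (subst sum.swap) (simp add: sym mult.commute)
  show ?thesis
    unfolding mmd2_def
    using bilinear[of w w, OF w_nonneg w_nonneg] bilinear[of v v, OF v_nonneg v_nonneg]
      bilinear[of w v, OF w_nonneg v_nonneg] swap
    by (simp add: algebra_simps sum.distrib sum_subtractf sum_distrib_left)
qed

lemma mmd2_distr_point_measure_nonneg:
  assumes "pd_kernel k" and "finite A"
    and "\<And>a. a \<in> A \<Longrightarrow> 0 \<le> w a" and "\<And>a. a \<in> A \<Longrightarrow> 0 \<le> v a"
  shows "0 \<le> mmd2 k (distr (point_measure A (\<lambda>a. ennreal (w a))) borel X)
                     (distr (point_measure A (\<lambda>a. ennreal (v a))) borel X)"
  using mmd2_distr_point_measure[OF assms, where X = X]
    pd_kernel_quadratic_form_nonneg[OF assms(1,2), of "\<lambda>a. w a - v a" X] by simp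

lemma sets_emp_dist [simp]: "sets (emp_dist X A) = sets borel"
  by (simp add: emp_dist_def)

lemma prob_space_emp_dist:
  assumes "finite A" and "A \<noteq> {}"
  shows "prob_space (emp_dist X A)"
  unfolding emp_dist_def
  by (auto intro!: prob_space.prob_space_distr prob_space_uniform_count_measure assms
           simp: space_uniform_count_measure)

lemma BS_run_step:
  assumes "BS_run dw E C1" and "Suc r < card E"
  obtains c where "c \<in> E - C1 r" and "C1 (Suc r) = insert c (C1 r)"
    and "\<And>c'. c' \<in> E - C1 r \<Longrightarrow>
           dw (insert c' (C1 r)) (E - insert c' (C1 r)) \<le> dw (insert c (C1 r)) (E - insert c (C1 r))"
proof -
  have "\<exists>c\<in>E - C1 r. C1 (Suc r) = insert c (C1 r) \<and>
      (\<forall>c'\<in>E - C1 r. dw (insert c' (C1 r)) (E - insert c' (C1 r))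
                     \<le> dw (insert c (C1 r)) (E - insert c (C1 r)))"
    using bspec[OF conjunct2[OF assms(1)[unfolded BS_run_def]], of "Suc r"] assms(2) by simp
  then show thesis
    using that by blast
qed

lemma BS_run_subset_card:
  assumes "BS_run dw E C1" and "finite E" and "r < card E"
  shows "C1 r \<subseteq> E" and "card (C1 r) = r"
proof -
  have "C1 r \<subseteq> E \<and> card (C1 r) = r"
    using assms(3)
  proof (induction r)
    case 0
    then show ?case
      using assms(1) by (simp add: BS_run_def)
  next
    case (Suc r)
    then have "C1 r \<subseteq> E" and "card (C1 r) = r"
      by simp_all
    moreover obtain c where "c \<in> E - C1 r" and "C1 (Suc r) = insert c (C1 r)"
      using BS_run_step[OF assms(1) Suc.prems] .
    moreover have "finite (C1 r)"
      using \<open>C1 r \<subseteq> E\<close> assms(2) by (rule finite_subset)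
    ultimately show ?case by simp
  qed
  then show "C1 r \<subseteq> E" and "card (C1 r) = r" by auto
qed

lemma BS_run_mono:
  assumes "BS_run dw E C1" and "r \<le> r'" and "r' < card E"
  shows "C1 r \<subseteq> C1 r'"
  using assms(2,3)
proof (induction r' rule: dec_induct)
  case (step r')
  obtain c where "c \<in> E - C1 r'" and "C1 (Suc r') = insert c (C1 r')"
    using BS_run_step[OF assms(1) step.prems] .
  moreover have "C1 r \<subseteq> C1 r'"
    using step.IH step.prems by simp
  ultimately show ?case by blast
qed simp

lemma scaled_square_diff_of_fractions:
  fixes a b s M :: real
  assumes "0 < s" and "s < M"
  shows "s * (M - s) / M * (a / s - b / (M - s))^2 = (a * M - s * (a + b))^2 / (M * s * (M - s))"
proof -
  have "M - s \<noteq> 0" and "s \<noteq> 0"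
    using assms by auto
  then have "a / s - b / (M - s) = (a * M - s * (a + b)) / (s * (M - s))"
    by (simp add: field_simps)
  with \<open>M - s \<noteq> 0\<close> \<open>s \<noteq> 0\<close> show ?thesis
    by (simp add: power_divide power_mult_distrib power2_eq_square)
qed

locale two_population_oracle =
  fixes k :: "'x::topological_space \<Rightarrow> 'x \<Rightarrow> real" and D :: "nat \<Rightarrow> 'o set" and X :: "'o \<Rightarrow> 'x"
  assumes characteristic: "characteristic_kernel k"
    and finite_D: "finite (D 1)" "finite (D 2)"
    and D_nonempty: "D 1 \<noteq> {}" "D 2 \<noteq> {}"
    and D_disjoint: "D 1 \<inter> D 2 = {}"
    and emp_dist_distinct: "emp_dist X (D 1) \<noteq> emp_dist X (D 2)"
begin

abbreviation n1 :: nat where "n1 \<equiv> card (D 1)"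
abbreviation n2 :: nat where "n2 \<equiv> card (D 2)"
abbreviation DD :: "'o set" where "DD \<equiv> D 1 \<union> D 2"
abbreviation dw :: "'o set \<Rightarrow> 'o set \<Rightarrow> real" where "dw \<equiv> dw_star k 2 D X"

lemma pd_kernel: "pd_kernel k"
  using characteristic by (simp add: characteristic_kernel_def)

lemma finite_DD: "finite DD"
  using finite_D by simp

lemma card_DD: "card DD = n1 + n2"
  using card_Un_disjoint[OF finite_D D_disjoint] .

lemma n1_pos: "0 < n1" and n2_pos: "0 < n2"
  using finite_D D_nonempty by (simp_all add: card_gt_0_iff)

definition N :: real where
  "N = real (card DD)"

lemma N_eq: "N = real n1 + real n2"
  unfolding N_def card_DD by simp

lemma N_pos: "0 < N"
  using n1_pos by (simp add: N_eq)

definition weight :: "real \<Rightarrow> 'o \<Rightarrow> real" where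
  "weight p x = (if x \<in> D 1 then p / n1 else if x \<in> D 2 then (1 - p) / n2 else 0)"

definition mixture :: "real \<Rightarrow> 'x measure" where
  "mixture p = distr (point_measure DD (\<lambda>x. ennreal (weight p x))) borel X"

definition d12 :: real where
  "d12 = mmd2 k (emp_dist X (D 1)) (emp_dist X (D 2))"

lemma weight_nonneg: "0 \<le> p \<Longrightarrow> p \<le> 1 \<Longrightarrow> 0 \<le> weight p x"
  by (simp add: weight_def)

lemma mixture_1: "mixture 1 = emp_dist X (D 1)"
  unfolding mixture_def emp_dist_def uniform_count_measure_def
  using finite_D D_disjoint
  by (intro distr_point_measure_restrict) (auto simp: weight_def divide_ennreal ennreal_of_nat_eq_real_of_nat)

lemma mixture_0: "mixture 0 = emp_dist X (D 2)"
  unfolding mixture_def emp_dist_def uniform_count_measure_def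
  using finite_D D_disjoint
  by (intro distr_point_measure_restrict) (auto simp: weight_def divide_ennreal ennreal_of_nat_eq_real_of_nat)

lemma mmd2_mixture:
  assumes "0 \<le> p" "p \<le> 1" "0 \<le> q" "q \<le> 1"
  shows "mmd2 k (mixture p) (mixture q) = (p - q)^2 * d12"
proof -
  let ?u = "\<lambda>x. weight 1 x - weight 0 x"
  have diff: "weight p x - weight q x = (p - q) * ?u x" for x
    by (simp add: weight_def diff_divide_distrib algebra_simps)
  have mmd2_eq: "mmd2 k (mixture p') (mixture q') = (\<Sum>x\<in>DD. \<Sum>y\<in>DD.
      (weight p' x - weight q' x) * (weight p' y - weight q' y) * k (X x) (X y))"
    if "0 \<le> p'" "p' \<le> 1" "0 \<le> q'" "q' \<le> 1" for p' q'
    unfolding mixture_def using that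
    by (intro mmd2_distr_point_measure pd_kernel finite_DD weight_nonneg)
  have "d12 = (\<Sum>x\<in>DD. \<Sum>y\<in>DD. ?u x * ?u y * k (X x) (X y))"
    using mmd2_eq[of 1 0] by (simp add: d12_def mixture_1 mixture_0)
  then show ?thesis
    using mmd2_eq[OF assms]
    by (simp add: diff sum_distrib_left power2_eq_square algebra_simps)
qed

lemma d12_pos: "0 < d12"
proof -
  have "0 \<le> d12"
    unfolding d12_def mixture_1[symmetric] mixture_0[symmetric] mixture_def
    by (intro mmd2_distr_point_measure_nonneg pd_kernel finite_DD weight_nonneg) simp_all
  moreover have "d12 \<noteq> 0"
  proof
    assume "d12 = 0"
    then have "emp_dist X (D 1) = emp_dist X (D 2)"
      using characteristic prob_space_emp_dist[OF finite_D(1) D_nonempty(1)]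
        prob_space_emp_dist[OF finite_D(2) D_nonempty(2)]
        sets_emp_dist unfolding characteristic_kernel_def d12_def by blast
    with emp_dist_distinct show False ..
  qed
  ultimately show ?thesis by simp
qed

lemma card_Int_D1_plus_card_Int_D2:
  assumes "S \<subseteq> DD"
  shows "card (S \<inter> D 1) + card (S \<inter> D 2) = card S"
proof -
  have "card (S \<inter> D 1) + card (S \<inter> D 2) = card ((S \<inter> D 1) \<union> (S \<inter> D 2))"
    using finite_D D_disjoint by (intro card_Un_disjoint[symmetric]) auto
  also have "(S \<inter> D 1) \<union> (S \<inter> D 2) = S"
    using assms by blast
  finally show ?thesis .
qed

lemma oracle_mix_eq_mixture:
  assumes "S \<subseteq> DD" and "S \<noteq> {}"
  shows "oracle_mix 2 D X S = mixture (card (S \<inter> D 1) / card S)"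
proof -
  have S_pos: "0 < card S"
    using assms finite_subset[OF assms(1) finite_DD] by (simp add: card_gt_0_iff)
  have two: "{1..2::nat} = {1, 2}"
    by auto
  have "(\<Sum>i\<in>{1..2}. if x \<in> D i then real (card (S \<inter> D i)) / (real (card S) * real (card (D i))) else 0)
      = weight (card (S \<inter> D 1) / card S) x" for x
    unfolding two using D_disjoint S_pos card_Int_D1_plus_card_Int_D2[OF assms(1)]
    by (auto simp: weight_def field_simps)
  moreover have "(\<Union>i\<in>{1..2::nat}. D i) = DD"
    unfolding two by simp
  ultimately show ?thesis
    by (simp add: oracle_mix_def mixture_def)
qed

definition split_value :: "real \<Rightarrow> real \<Rightarrow> real" where
  "split_value a s = (a * N - s * n1)^2 / (N * s * (N - s)) * d12"

lemma dw_eq_split_value: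
  assumes S: "S \<subseteq> DD" "S \<noteq> {}" "S \<noteq> DD"
  shows "dw S (DD - S) = split_value (card (S \<inter> D 1)) (card S)"
proof -
  let ?a = "real (card (S \<inter> D 1))" and ?s = "real (card S)"
  have T: "DD - S \<subseteq> DD" "DD - S \<noteq> {}"
    using S by auto
  have finite_S: "finite S"
    using S(1) finite_DD by (rule finite_subset)
  have "0 < card S"
    using finite_S S(2) by (simp add: card_gt_0_iff)
  moreover have "card S < card DD"
    using S(1,3) finite_DD by (simp add: psubset_card_mono)
  ultimately have s_pos: "0 < ?s" and s_less: "?s < N"
    by (simp_all add: N_def)
  have "card (S \<inter> D 1) \<le> card S"
    using finite_S by (simp add: card_mono)
  moreover have "card (S \<inter> D 1) \<le> n1"
    using finite_D(1) by (simp add: card_mono)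
  ultimately have a_le: "?a \<le> ?s" "?a \<le> n1"
    by simp_all
  have card_T: "real (card (DD - S)) = N - ?s"
    using card_Diff_subset[OF finite_S S(1)] card_mono[OF finite_DD S(1)]
    by (simp add: N_def of_nat_diff)
  have "(DD - S) \<inter> D 1 = D 1 - S \<inter> D 1"
    by blast
  then have card_T1: "real (card ((DD - S) \<inter> D 1)) = n1 - ?a"
    using card_Diff_subset[of "S \<inter> D 1" "D 1"] card_mono[of "D 1" "S \<inter> D 1"] finite_D(1)
    by (simp add: of_nat_diff finite_subset)
  have "card ((DD - S) \<inter> D 1) \<le> card (DD - S)"
    using finite_DD by (simp add: card_mono)
  then have b_le: "n1 - ?a \<le> N - ?s"
    using card_T card_T1 by linarith
  have "dw S (DD - S) = ?s * (N - ?s) / (?s + (N - ?s))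
      * mmd2 k (mixture (?a / ?s)) (mixture ((n1 - ?a) / (N - ?s)))"
    unfolding dw_star_def oracle_mix_eq_mixture[OF S(1,2)] oracle_mix_eq_mixture[OF T] card_T card_T1 ..
  also have "\<dots> = ?s * (N - ?s) / N * (?a / ?s - (n1 - ?a) / (N - ?s))^2 * d12"
    using s_pos s_less a_le b_le by (subst mmd2_mixture) simp_all
  also have "\<dots> = split_value ?a ?s"
    using scaled_square_diff_of_fractions[OF s_pos s_less, of ?a "n1 - ?a"]
    by (simp add: split_value_def)
  finally show ?thesis .
qed

lemma split_value_diag:
  assumes "0 < s" and "s < N"
  shows "split_value s s = s / (N - s) * (n2^2 * d12 / N)"
proof -
  have "split_value s s = (s * n2)^2 / (N * s * (N - s)) * d12"
    by (simp add: split_value_def N_eq algebra_simps)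
  also have "\<dots> = s / (N - s) * (n2^2 * d12 / N)"
    using assms by (simp add: power2_eq_square field_simps)
  finally show ?thesis .
qed

lemma split_value_all_of_D1:
  assumes "0 < s" and "s < N"
  shows "split_value n1 s = (N - s) / s * (n1^2 * d12 / N)"
proof -
  have "split_value n1 s = (n1 * (N - s))^2 / (N * s * (N - s)) * d12"
    by (simp add: split_value_def algebra_simps)
  also have "\<dots> = (N - s) / s * (n1^2 * d12 / N)"
    using assms by (simp add: power2_eq_square field_simps)
  finally show ?thesis .
qed

lemma split_value_diag_strict_mono:
  assumes "0 < r" and "r < r'" and "r' < N"
  shows "split_value r r < split_value r' r'"
proof -
  have "r / (N - r) < r' / (N - r')"
    using assms by (simp add: field_simps)
  moreover have "0 < n2^2 * d12 / N"
    using n2_pos d12_pos N_pos by simp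
  ultimately show ?thesis
    using assms by (simp only: split_value_diag) (rule mult_strict_right_mono)
qed

lemma split_value_all_of_D1_strict_antimono:
  assumes "0 < r" and "r < r'" and "r' < N"
  shows "split_value n1 r' < split_value n1 r"
proof -
  have "(N - r') / r' < (N - r) / r"
    using assms by (simp add: field_simps)
  moreover have "0 < n1^2 * d12 / N"
    using n1_pos d12_pos N_pos by simp
  ultimately show ?thesis
    using assms by (simp only: split_value_all_of_D1) (rule mult_strict_right_mono)
qed

lemma split_value_pred_less_diag:
  assumes "n1 \<le> n2" and "2 \<le> s" and "s < N"
  shows "split_value (s - 1) s < split_value s s"
proof -
  have "N \<le> 2 * n2"
    using assms(1) by (simp add: N_eq)
  also have "\<dots> < 2 * s * n2"
    using assms(2) n2_pos by simp
  finally have "(s * n2 - N)^2 < (s * n2)^2"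
    using assms by (simp add: power2_eq_square algebra_simps)
  moreover have "(s - 1) * N - s * n1 = s * n2 - N" and "s * N - s * n1 = s * n2"
    by (simp_all add: N_eq algebra_simps)
  moreover have "0 < N * s * (N - s)"
    using assms by simp
  ultimately show ?thesis
    using d12_pos by (simp add: split_value_def divide_strict_right_mono)
qed

lemma dw_subset_D1:
  assumes "S \<subseteq> D 1" and "S \<noteq> {}"
  shows "dw S (DD - S) = split_value (card S) (card S)"
proof -
  have "S \<subseteq> DD" and "S \<noteq> DD"
    using assms(1) D_nonempty(2) D_disjoint by blast+
  with assms show ?thesis
    using dw_eq_split_value[of S] by (simp add: Int_absorb2)
qed

lemma dw_superset_D1:
  assumes "D 1 \<subseteq> S" and "S \<subseteq> DD" and "S \<noteq> DD"
  shows "dw S (DD - S) = split_value n1 (card S)"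
proof -
  have "S \<noteq> {}"
    using assms(1) D_nonempty(1) by blast
  with assms show ?thesis
    using dw_eq_split_value[of S] by (simp add: Int_absorb1)
qed

lemma dw_singleton:
  assumes "c \<in> DD"
  shows "dw {c} (DD - {c}) = (if c \<in> D 1 then real n2^2 else real n1^2) * (d12 / (N * (N - 1)))"
proof -
  have "card DD \<noteq> 1"
    using n1_pos n2_pos card_DD by simp
  then have "{c} \<noteq> DD"
    by (metis card_1_singleton_iff One_nat_def)
  then have "dw {c} (DD - {c}) = split_value (card ({c} \<inter> D 1)) 1"
    using assms dw_eq_split_value[of "{c}"] by simp
  then show ?thesis
    by (simp add: split_value_def N_eq power2_eq_square)
qed

lemma first_transfer_from_D1_optimal_iff:
  "(\<exists>c\<in>D 1. \<forall>c'\<in>DD. dw {c'} (DD - {c'}) \<le> dw {c} (DD - {c})) \<longleftrightarrow> n1 \<le> n2"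
proof -
  have factor_pos: "0 < d12 / (N * (N - 1))"
    using d12_pos n1_pos n2_pos by (simp add: N_eq)
  obtain c1 c2 where c1: "c1 \<in> D 1" and c2: "c2 \<in> D 2"
    using D_nonempty by blast
  have "c2 \<notin> D 1"
    using c2 D_disjoint by blast
  have dw_c1: "dw {c} (DD - {c}) = real n2^2 * (d12 / (N * (N - 1)))" if "c \<in> D 1" for c
    using that dw_singleton[of c] by simp
  have dw_c2: "dw {c2} (DD - {c2}) = real n1^2 * (d12 / (N * (N - 1)))"
    using c2 \<open>c2 \<notin> D 1\<close> dw_singleton[of c2] by simp
  show ?thesis
  proof
    assume "\<exists>c\<in>D 1. \<forall>c'\<in>DD. dw {c'} (DD - {c'}) \<le> dw {c} (DD - {c})"
    then obtain c where c: "c \<in> D 1" and le: "dw {c2} (DD - {c2}) \<le> dw {c} (DD - {c})"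
      using c2 by blast
    from le have "real n1^2 * (d12 / (N * (N - 1))) \<le> real n2^2 * (d12 / (N * (N - 1)))"
      unfolding dw_c1[OF c] dw_c2 .
    then have "real n1^2 \<le> real n2^2"
      using factor_pos by (rule mult_right_le_imp_le)
    then show "n1 \<le> n2"
      by (simp add: power_mono_iff)
  next
    assume "n1 \<le> n2"
    then have "real n1^2 * (d12 / (N * (N - 1))) \<le> real n2^2 * (d12 / (N * (N - 1)))"
      using factor_pos by (intro mult_right_mono power_mono) simp_all
    then have "dw {c'} (DD - {c'}) \<le> dw {c1} (DD - {c1})" if "c' \<in> DD" for c'
      using dw_singleton[OF that] dw_c1[OF c1] by simp
    with c1 show "\<exists>c\<in>D 1. \<forall>c'\<in>DD. dw {c'} (DD - {c'}) \<le> dw {c} (DD - {c})"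
      by blast
  qed
qed

lemma BS_run_step_within_D1:
  assumes run: "BS_run dw DD C1" and "n1 \<le> n2" and "1 \<le> r" and "r < n1" and "C1 r \<subseteq> D 1"
  shows "\<exists>c\<in>D 1 - C1 r. C1 (Suc r) = insert c (C1 r)"
proof -
  have "Suc r < card DD"
    using assms(4) n2_pos card_DD by simp
  obtain c where c: "c \<in> DD - C1 r" "C1 (Suc r) = insert c (C1 r)"
    and best: "\<And>c'. c' \<in> DD - C1 r \<Longrightarrow>
      dw (insert c' (C1 r)) (DD - insert c' (C1 r)) \<le> dw (insert c (C1 r)) (DD - insert c (C1 r))"
    using BS_run_step[OF run \<open>Suc r < card DD\<close>] by blast
  have card_r: "card (C1 r) = r"
    using BS_run_subset_card(2)[OF run finite_DD] \<open>Suc r < card DD\<close> by simp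
  have finite_r: "finite (C1 r)"
    using assms(5) finite_D(1) by (rule finite_subset)
  have "\<not> D 1 \<subseteq> C1 r"
  proof
    assume "D 1 \<subseteq> C1 r"
    then have "n1 \<le> r"
      using card_mono[OF finite_r] card_r by metis
    with assms(4) show False
      by simp
  qed
  then obtain c1 where c1: "c1 \<in> D 1 - C1 r"
    by blast
  have s_range: "2 \<le> real (Suc r)" "real (Suc r) < N"
    using assms(3) \<open>Suc r < card DD\<close> by (simp_all add: N_def)
  have "c \<in> D 1"
  proof (rule ccontr)
    assume "c \<notin> D 1"
    have "card (insert c (C1 r)) = Suc r"
      using c(1) card_r finite_r by simp
    then have "insert c (C1 r) \<noteq> DD"
      using \<open>Suc r < card DD\<close> by (metis less_irrefl)
    moreover have "insert c (C1 r) \<inter> D 1 = C1 r"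
      using \<open>c \<notin> D 1\<close> assms(5) by auto
    ultimately have "dw (insert c (C1 r)) (DD - insert c (C1 r)) = split_value (real (Suc r) - 1) (Suc r)"
      using dw_eq_split_value[of "insert c (C1 r)"] c(1) assms(5) card_r finite_r by auto
    moreover have "dw (insert c1 (C1 r)) (DD - insert c1 (C1 r)) = split_value (Suc r) (Suc r)"
      using dw_subset_D1[of "insert c1 (C1 r)"] c1 assms(5) card_r finite_r by simp
    ultimately show False
      using best[of c1] c1 split_value_pred_less_diag[OF assms(2) s_range] by simp
  qed
  with c show ?thesis
    by blast
qed

context
  fixes C1 :: "nat \<Rightarrow> 'o set"
  assumes run: "BS_run dw DD C1" and n1_le_n2: "n1 \<le> n2"
    and first_from_D1: "transferred_from C1 1 (D 1)"
begin

lemma BS_run_first_phase: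
  assumes "1 \<le> r" and "r \<le> n1"
  shows "C1 r \<subseteq> D 1" and "transferred_from C1 r (D 1)"
proof -
  have "C1 r \<subseteq> D 1 \<and> transferred_from C1 r (D 1)"
    using assms
  proof (induction r rule: dec_induct)
    case base
    obtain c where "c \<in> D 1" and "C1 1 - C1 0 = {c}"
      using first_from_D1 by (auto simp: transferred_from_def)
    moreover have "C1 0 = {}"
      using run by (simp add: BS_run_def)
    ultimately show ?case
      using first_from_D1 by auto
  next
    case (step r)
    then have "C1 r \<subseteq> D 1"
      by simp
    then obtain c where "c \<in> D 1 - C1 r" and "C1 (Suc r) = insert c (C1 r)"
      using BS_run_step_within_D1[OF run n1_le_n2 step.hyps(1)] step.prems by auto
    then show ?case
      using \<open>C1 r \<subseteq> D 1\<close> by (auto simp: transferred_from_def)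
  qed
  then show "C1 r \<subseteq> D 1" and "transferred_from C1 r (D 1)"
    by simp_all
qed

lemma BS_run_first_phase_ends_with_D1: "C1 n1 = D 1"
proof (rule card_subset_eq[OF finite_D(1)])
  show "C1 n1 \<subseteq> D 1"
    using BS_run_first_phase(1)[of n1] n1_pos by simp
  show "card (C1 n1) = n1"
    using BS_run_subset_card(2)[OF run finite_DD] n2_pos card_DD by simp
qed

lemma dw_first_phase:
  assumes "1 \<le> r" and "r \<le> n1"
  shows "dw (C1 r) (DD - C1 r) = split_value r r"
proof -
  have "card (C1 r) = r"
    using BS_run_subset_card(2)[OF run finite_DD] assms(2) n2_pos card_DD by simp
  with assms show ?thesis
    using dw_subset_D1[OF BS_run_first_phase(1)[OF assms]] by fastforce
qed

lemma dw_second_phase: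
  assumes "n1 \<le> r" and "r < card DD"
  shows "dw (C1 r) (DD - C1 r) = split_value n1 r"
proof -
  have "D 1 \<subseteq> C1 r"
    using BS_run_mono[OF run assms] BS_run_first_phase_ends_with_D1 by simp
  moreover have "C1 r \<subseteq> DD" and "card (C1 r) = r"
    using BS_run_subset_card[OF run finite_DD assms(2)] by simp_all
  moreover have "C1 r \<noteq> DD"
    using \<open>card (C1 r) = r\<close> assms(2) by auto
  ultimately show ?thesis
    using dw_superset_D1 by simp
qed

lemma dw_strict_mono_first_phase:
  assumes "r \<in> {1..n1}" and "r' \<in> {1..n1}" and "r < r'"
  shows "dw (C1 r) (DD - C1 r) < dw (C1 r') (DD - C1 r')"
proof -
  have r: "1 \<le> r" "r \<le> n1" and r': "1 \<le> r'" "r' \<le> n1"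
    using assms(1,2) by simp_all
  have "real r' < N"
    using r'(2) n2_pos by (simp add: N_eq)
  then have "split_value r r < split_value r' r'"
    using r(1) assms(3) by (intro split_value_diag_strict_mono) simp_all
  then show ?thesis
    unfolding dw_first_phase[OF r] dw_first_phase[OF r'] .
qed

lemma dw_strict_antimono_second_phase:
  assumes "r \<in> {n1..card DD - 1}" and "r' \<in> {n1..card DD - 1}" and "r < r'"
  shows "dw (C1 r') (DD - C1 r') < dw (C1 r) (DD - C1 r)"
proof -
  have r: "n1 \<le> r" "r < card DD" and r': "n1 \<le> r'" "r' < card DD"
    using assms(1,2) card_DD n2_pos by auto
  have "real r' < N"
    using r'(2) by (simp add: N_def)
  then have "split_value n1 r' < split_value n1 r"
    using r(1) n1_pos assms(3) by (intro split_value_all_of_D1_strict_antimono) simp_all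
  then show ?thesis
    unfolding dw_second_phase[OF r] dw_second_phase[OF r'] .
qed

end

end

theorem lemma1:
  fixes k :: "'x::{metric_space, second_countable_topology} \<Rightarrow> 'x \<Rightarrow> real"
    and D :: "nat \<Rightarrow> 'o set" and X :: "'o \<Rightarrow> 'x"
  assumes char: "characteristic_kernel k"
    and fin: "finite (D 1)" "finite (D 2)"
    and ne: "D 1 \<noteq> {}" "D 2 \<noteq> {}"
    and disj: "D 1 \<inter> D 2 = {}"
    and distinct: "emp_dist X (D 1) \<noteq> emp_dist X (D 2)"
  defines "n1 \<equiv> card (D 1)" and "n2 \<equiv> card (D 2)" and "DD \<equiv> D 1 \<union> D 2"
    and "dw \<equiv> dw_star k 2 D X"
  shows
    "((\<exists>c\<in>D 1. \<forall>c'\<in>DD. dw {c'} (DD - {c'}) \<le> dw {c} (DD - {c})) \<longleftrightarrow> n1 \<le> n2)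
   \<and> (\<forall>C1. BS_run dw DD C1 \<longrightarrow> n1 \<le> n2 \<longrightarrow> transferred_from C1 1 (D 1) \<longrightarrow>
        (\<forall>r\<in>{1..n1}. transferred_from C1 r (D 1))
      \<and> (\<forall>r\<in>{1..n1}. \<forall>r'\<in>{1..n1}. r < r' \<longrightarrow>
            dw (C1 r) (DD - C1 r) < dw (C1 r') (DD - C1 r'))
      \<and> (\<forall>r\<in>{n1..card DD - 1}. \<forall>r'\<in>{n1..card DD - 1}. r < r' \<longrightarrow>
            dw (C1 r') (DD - C1 r') < dw (C1 r) (DD - C1 r)))"
proof -
  interpret two_population_oracle k D X
    using assms by unfold_locales
  show ?thesis
    unfolding n1_def n2_def DD_def dw_def
    using first_transfer_from_D1_optimal_iff BS_run_first_phase(2)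
      dw_strict_mono_first_phase dw_strict_antimono_second_phase
    by simp
qed

end
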